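(* Let $p$ be an odd prime, $r=(p-1)/2$, $\zeta_p=e^{2\pi i/p}$, $\varepsilon=(-1)^{(p-1)/2}$, and let $Q$ be either $Q_1(x)=x^2/p$ or $Q_2(x)=cx^2/p$ with $c$ a fixed quadratic non-residue mod $p$; let $B(x,y)=Q(x+y)-Q(x)-Q(y)$ and $G_Q=\sum_{x\in\mathbb{Z}/p\mathbb{Z}}e^{2\pi iQ(x)}$. Define $(r+1)\times(r+1)$ matrices indexed by $0\le j,k\le r$: $T=\operatorname{diag}(\theta_0,\dots,\theta_r)$ with $\theta_j=e^{2\pi iQ(j)}$, and $S$ with $S_{j0}=1/G_Q$ for all $j$, $S_{0k}=2/G_Q$ for $1\le k\le r$, and $S_{jk}=\frac{1}{G_Q}\left(e^{-2\pi iB(j,k)}+e^{2\pi iB(j,k)}\right)$ for $1\le j,k\le r$. Let $\xi:\mathrm{SL}_2(\mathbb{F}_p)\to\mathrm{GL}_{r+1}(\mathbb{Q}(\zeta_p))$ be the representation with $\xi(\mathfrak{s})=S$, $\xi(\mathfrak{t})=T$, where $\mathfrak{s}=\begin{pmatrix}0&-1\\1&0\end{pmatrix}$, $\mathfrak{t}=\begin{pmatrix}1&1\\0&1\end{pmatrix}$. Let $\gamma$ be a generator of the cyclic group $\mathrm{Gal}(\mathbb{Q}(\zeta_p)/\mathbb{Q})$, let $\tau=\gamma^2$, and let $V_Q$ be the Vandermonde matrix with $(j,k)$ entry $\theta_j^{\,k}$ ($0\le j,k\le r$). Then $\tau$ permutes $\{\theta_0,\dots,\theta_r\}$ fixing $\theta_0=1$,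 so there is a unique permutation matrix $P$ with $\tau(V_Q)=P\,V_Q$; and for every $g\in\mathrm{SL}_2(\mathbb{F}_p)$ one has $\tau(\xi(g))=P\,\xi(g)\,P^{-1}$.
   Context: For $\alpha\in\mathrm{Gal}(\mathbb{Q}(\zeta_p)/\mathbb{Q})$ and a matrix $M$ with entries in $\mathbb{Q}(\zeta_p)$, $\alpha(M)$ denotes the matrix obtained by applying $\alpha$ to each entry. The matrices $S,T$ are the matrices of the Weil representation attached to $Q$ restricted to the subspace of even functions $\mathbb{Z}/p\mathbb{Z}\to\mathbb{C}$, in the basis $\delta_0,\ \delta_1+\delta_{p-1},\dots,\delta_r+\delta_{r+1}$; $\xi$ is the principal series Weil representation of dimension $(p+1)/2$ ($\xi_1$ for $Q_1$, $\xi_2$ for $Q_2$). One has $G_{Q}=\pm\sqrt{\varepsilon p}$, where $\sqrt{\varepsilon p}=\sum_x \zeta_p^{x^2}$. *)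

theory Defs
  imports "HOL-Number_Theory.Number_Theory" "Jordan_Normal_Form.Matrix"
begin

definition e :: "real \<Rightarrow> complex" where
  "e x = exp (2 * of_real pi * \<i> * of_real x)"

definition zeta :: "nat \<Rightarrow> complex" where
  "zeta p = e (1 / real p)"

(* Q(x) = c x^2 / p ; c = 1 gives Q_1, c a non-residue gives Q_2 *)
definition Qf :: "nat \<Rightarrow> int \<Rightarrow> int \<Rightarrow> real" where
  "Qf p c x = real_of_int (c * x^2) / real p"

definition Bf :: "nat \<Rightarrow> int \<Rightarrow> int \<Rightarrow> int \<Rightarrow> real" where
  "Bf p c x y = Qf p c (x + y) - Qf p c x - Qf p c y"

definition gauss :: "nat \<Rightarrow> int \<Rightarrow> complex" where
  "gauss p c = (\<Sum>x\<in>{0..<int p}. e (Qf p c x))"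

definition theta :: "nat \<Rightarrow> int \<Rightarrow> nat \<Rightarrow> complex" where
  "theta p c j = e (Qf p c (int j))"

definition Tmat :: "nat \<Rightarrow> int \<Rightarrow> complex mat" where
  "Tmat p c = (let r = (p - 1) div 2 in
     mat (r + 1) (r + 1) (\<lambda>(j, k). if j = k then theta p c j else 0))"

definition Smat :: "nat \<Rightarrow> int \<Rightarrow> complex mat" where
  "Smat p c = (let r = (p - 1) div 2; G = gauss p c in
     mat (r + 1) (r + 1) (\<lambda>(j, k).
       if k = 0 then 1 / G
       else if j = 0 then 2 / G
       else (e (- Bf p c (int j) (int k)) + e (Bf p c (int j) (int k))) / G))"

definition Vmat :: "nat \<Rightarrow> int \<Rightarrow> complex mat" where
  "Vmat p c = (let r = (p - 1) div 2 in
     mat (r + 1) (r + 1) (\<lambda>(j, k). theta p c j ^ k))"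

(* SL_2(F_p): 2x2 matrices (a,b,c,d) = [[a,b],[c,d]] with entries in {0..p-1}, det = 1 mod p *)
definition SL2 :: "nat \<Rightarrow> (int \<times> int \<times> int \<times> int) set" where
  "SL2 p = {(a, b, c, d). a \<in> {0..<int p} \<and> b \<in> {0..<int p} \<and> c \<in> {0..<int p}
              \<and> d \<in> {0..<int p} \<and> (a * d - b * c) mod int p = 1}"

definition SL2_mult :: "nat \<Rightarrow> (int \<times> int \<times> int \<times> int) \<Rightarrow> (int \<times> int \<times> int \<times> int)
                         \<Rightarrow> (int \<times> int \<times> int \<times> int)" where
  "SL2_mult p g h = (case g of (a, b, c, d) \<Rightarrow> case h of (a', b', c', d') \<Rightarrow>
     ((a * a' + b * c') mod int p, (a * b' + b * d') mod int p,
      (c * a' + d * c') mod int p, (c * b' + d * d') mod int p))"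

definition s_gen :: "nat \<Rightarrow> int \<times> int \<times> int \<times> int" where
  "s_gen p = (0, int p - 1, 1, 0)"

definition t_gen :: "nat \<Rightarrow> int \<times> int \<times> int \<times> int" where
  "t_gen p = (1, 1, 0, 1)"

definition cyc_field :: "nat \<Rightarrow> complex set" where
  "cyc_field p = \<Inter>{F. zeta p \<in> F \<and> 0 \<in> F \<and> 1 \<in> F \<and>
      (\<forall>x\<in>F. \<forall>y\<in>F. x + y \<in> F \<and> x * y \<in> F \<and> - x \<in> F \<and> (x \<noteq> 0 \<longrightarrow> inverse x \<in> F))}"

(* Gal(Q(zeta_p)/Q): field automorphisms of Q(zeta_p) (extended by the identity outside,
   so that each automorphism is represented by a unique function complex => complex).
   Every field automorphism fixes Q pointwise. *)
definition gal :: "nat \<Rightarrow> (complex \<Rightarrow> complex) set" where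
  "gal p = {\<sigma>. bij_betw \<sigma> (cyc_field p) (cyc_field p) \<and> \<sigma> 1 = 1 \<and>
      (\<forall>x\<in>cyc_field p. \<forall>y\<in>cyc_field p. \<sigma> (x + y) = \<sigma> x + \<sigma> y \<and> \<sigma> (x * y) = \<sigma> x * \<sigma> y) \<and>
      (\<forall>x. x \<notin> cyc_field p \<longrightarrow> \<sigma> x = x)}"

definition is_gal_generator :: "nat \<Rightarrow> (complex \<Rightarrow> complex) \<Rightarrow> bool" where
  "is_gal_generator p \<gamma> \<longleftrightarrow> \<gamma> \<in> gal p \<and> (\<forall>\<sigma>\<in>gal p. \<exists>n. \<sigma> = \<gamma> ^^ n)"

definition perm_mat :: "nat \<Rightarrow> complex mat \<Rightarrow> bool" where
  "perm_mat n P \<longleftrightarrow> (\<exists>\<pi>. \<pi> permutes {..<n} \<and>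
      P = mat n n (\<lambda>(i, j). if \<pi> i = j then 1 else 0))"

definition is_xi :: "nat \<Rightarrow> int \<Rightarrow> ((int \<times> int \<times> int \<times> int) \<Rightarrow> complex mat) \<Rightarrow> bool" where
  "is_xi p c \<xi> \<longleftrightarrow> (let r = (p - 1) div 2 in
     (\<forall>g\<in>SL2 p. \<xi> g \<in> carrier_mat (r + 1) (r + 1) \<and> invertible_mat (\<xi> g) \<and>
         (\<forall>i<r + 1. \<forall>j<r + 1. \<xi> g $$ (i, j) \<in> cyc_field p)) \<and>
     (\<forall>g\<in>SL2 p. \<forall>h\<in>SL2 p. \<xi> (SL2_mult p g h) = \<xi> g * \<xi> h) \<and>
     \<xi> (s_gen p) = Smat p c \<and> \<xi> (t_gen p) = Tmat p c)"

end

theory Submission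
  imports Defs
begin

(*
  Write theta_j = zeta^(c j^2) and let gamma(zeta) = zeta^a.  Then tau = gamma^2 sends zeta^m to
  zeta^(a^2 m), so tau(theta_j) = zeta^(c (a j)^2) = theta_(pi j), where pi j in {0..r} represents
  the class of +-a j mod p; it is because the exponent a^2 of tau is a square that tau permutes
  the theta_j.  The same substitution x -> a x leaves the Gauss sum invariant and carries e(+-B(j,k))
  to e(+-B(pi j, pi k)), so tau(S) and tau(T) arise from S and T by permuting rows and columns by
  pi: tau(X) P = P X for X = S, T.  Since tau acts entrywise as a field automorphism, the set of g
  with tau(xi g) P = P (xi g) is closed under products, and s, t generate SL_2(F_p).  P is unique
  because the column (theta_j)_j of V_Q has distinct entries.
*)

section \<open>Roots of unity\<close>

definition zeta_int_pow :: "nat \<Rightarrow> int \<Rightarrow> complex" where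
  "zeta_int_pow p m = zeta p ^ nat (m mod int p)"

lemma e_eq_cis: "e x = cis (2 * pi * x)"
  unfolding e_def cis_conv_exp by (simp add: mult_ac)

lemma zeta_power_eq_cis: "zeta p ^ k = cis (2 * pi * real k / real p)"
  unfolding zeta_def e_eq_cis DeMoivre by (simp add: field_simps)

lemma zeta_power_mod:
  assumes "p > 0" shows "zeta p ^ k = zeta p ^ (k mod p)"
proof -
  have "zeta p ^ k = (zeta p ^ p) ^ (k div p) * zeta p ^ (k mod p)"
    unfolding power_mult [symmetric] power_add [symmetric] by simp
  also have "zeta p ^ p = 1"
    using assms by (simp add: zeta_power_eq_cis)
  finally show ?thesis by simp
qed

lemma zeta_power_eq_iff:
  assumes "p > 0" shows "zeta p ^ k = zeta p ^ l \<longleftrightarrow> k mod p = l mod p"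
proof
  have "inj_on (\<lambda>k. cis (2 * pi * real k / real p)) {..<p}"
    using bij_betw_roots_unity[OF assms] by (simp add: bij_betw_def)
  moreover assume "zeta p ^ k = zeta p ^ l"
  then have "zeta p ^ (k mod p) = zeta p ^ (l mod p)"
    using zeta_power_mod[OF assms] by metis
  ultimately show "k mod p = l mod p"
    using assms by (auto simp: inj_on_def zeta_power_eq_cis)
qed (metis zeta_power_mod[OF assms])

lemma root_of_unity_eq_zeta_power:
  assumes "p > 0" "z ^ p = 1" shows "\<exists>k<p. z = zeta p ^ k"
  using bij_betw_roots_unity[OF assms(1)] assms(2) unfolding bij_betw_def zeta_power_eq_cis by auto

lemma zeta_int_pow_of_nat: "p > 0 \<Longrightarrow> zeta_int_pow p (int k) = zeta p ^ k"
  unfolding zeta_int_pow_def by (subst zeta_power_eq_iff) (auto simp: nat_mod_as_int)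

lemma zeta_int_pow_eq_iff:
  "p > 0 \<Longrightarrow> zeta_int_pow p m = zeta_int_pow p n \<longleftrightarrow> [m = n] (mod int p)"
  unfolding zeta_int_pow_def cong_def
  by (subst zeta_power_eq_iff) (auto simp: nat_mod_as_int eq_nat_nat_iff)

lemma e_of_int_divide:
  assumes "p > 0" shows "e (of_int m / real p) = zeta_int_pow p m"
proof -
  define q where "q = m div int p"
  define k where "k = nat (m mod int p)"
  have "m = int p * q + int k"
    using assms unfolding q_def k_def by simp
  then have "real_of_int m = real p * of_int q + real k"
    by (metis of_int_add of_int_mult of_int_of_nat_eq)
  then have "e (of_int m / real p) = cis (2 * pi * of_int q) * cis (2 * pi * real k / real p)"
    using assms unfolding e_eq_cis cis_mult by (simp add: field_simps)
  then show ?thesis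
    unfolding zeta_int_pow_def zeta_power_eq_cis k_def by simp
qed

section \<open>The cyclotomic field and its automorphisms\<close>

lemma cyc_field_closed:
  shows zeta_in_cyc_field: "zeta p \<in> cyc_field p"
    and zero_in_cyc_field: "0 \<in> cyc_field p"
    and one_in_cyc_field: "1 \<in> cyc_field p"
    and add_in_cyc_field: "x \<in> cyc_field p \<Longrightarrow> y \<in> cyc_field p \<Longrightarrow> x + y \<in> cyc_field p"
    and mult_in_cyc_field: "x \<in> cyc_field p \<Longrightarrow> y \<in> cyc_field p \<Longrightarrow> x * y \<in> cyc_field p"
  unfolding cyc_field_def by blast+

lemma two_in_cyc_field: "2 \<in> cyc_field p"
  using add_in_cyc_field[OF one_in_cyc_field one_in_cyc_field, of p] by simp

lemma inverse_in_cyc_field: "x \<in> cyc_field p \<Longrightarrow> inverse x \<in> cyc_field p"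
  by (cases "x = 0") (auto simp: zero_in_cyc_field cyc_field_def)

lemma power_in_cyc_field: "x \<in> cyc_field p \<Longrightarrow> x ^ n \<in> cyc_field p"
  by (induction n) (simp_all add: one_in_cyc_field mult_in_cyc_field)

lemma sum_in_cyc_field: "(\<And>x. x \<in> A \<Longrightarrow> f x \<in> cyc_field p) \<Longrightarrow> sum f A \<in> cyc_field p"
  by (induction A rule: infinite_finite_induct) (simp_all add: zero_in_cyc_field add_in_cyc_field)

lemma zeta_int_pow_in_cyc_field: "zeta_int_pow p m \<in> cyc_field p"
  unfolding zeta_int_pow_def by (intro power_in_cyc_field zeta_in_cyc_field)

locale gal_aut =
  fixes p :: nat and \<sigma> :: "complex \<Rightarrow> complex"
  assumes gal: "\<sigma> \<in> gal p"
begin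

lemma bij: "bij_betw \<sigma> (cyc_field p) (cyc_field p)"
  and one [simp]: "\<sigma> 1 = 1"
  and add: "x \<in> cyc_field p \<Longrightarrow> y \<in> cyc_field p \<Longrightarrow> \<sigma> (x + y) = \<sigma> x + \<sigma> y"
  and mult: "x \<in> cyc_field p \<Longrightarrow> y \<in> cyc_field p \<Longrightarrow> \<sigma> (x * y) = \<sigma> x * \<sigma> y"
  using gal unfolding gal_def by blast+

lemma zero [simp]: "\<sigma> 0 = 0"
  using add[OF zero_in_cyc_field zero_in_cyc_field] by simp

lemma two [simp]: "\<sigma> 2 = 2"
  using add[OF one_in_cyc_field one_in_cyc_field] by simp

lemma power: "x \<in> cyc_field p \<Longrightarrow> \<sigma> (x ^ n) = \<sigma> x ^ n"
  by (induction n) (auto simp: mult power_in_cyc_field)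

lemma sum: "(\<And>x. x \<in> A \<Longrightarrow> f x \<in> cyc_field p) \<Longrightarrow> \<sigma> (sum f A) = (\<Sum>x\<in>A. \<sigma> (f x))"
  by (induction A rule: infinite_finite_induct) (auto simp: add sum_in_cyc_field)

lemma inverse: "x \<in> cyc_field p \<Longrightarrow> \<sigma> (inverse x) = inverse (\<sigma> x)"
proof (cases "x = 0")
  case False
  assume x: "x \<in> cyc_field p"
  have "\<sigma> x * \<sigma> (inverse x) = 1"
    using x False by (simp flip: mult add: inverse_in_cyc_field)
  then show ?thesis by (simp add: inverse_unique)
qed simp

lemma divide: "x \<in> cyc_field p \<Longrightarrow> y \<in> cyc_field p \<Longrightarrow> \<sigma> (x / y) = \<sigma> x / \<sigma> y"
  by (simp add: divide_inverse mult inverse inverse_in_cyc_field)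

lemma zeta_image:
  assumes "p > 1" obtains a where "\<not> int p dvd int a" "\<sigma> (zeta p) = zeta p ^ a"
proof -
  have "\<sigma> (zeta p) ^ p = \<sigma> (zeta p ^ p)"
    by (simp add: power zeta_in_cyc_field)
  also have "zeta p ^ p = 1"
    by (simp add: zeta_power_eq_cis)
  finally obtain a where a: "a < p" "\<sigma> (zeta p) = zeta p ^ a"
    using root_of_unity_eq_zeta_power[of p] assms by auto
  have "zeta p \<noteq> 1"
    using zeta_power_eq_iff[of p 1 0] assms by simp
  then have "\<sigma> (zeta p) \<noteq> \<sigma> 1"
    using bij one_in_cyc_field zeta_in_cyc_field unfolding bij_betw_def inj_on_def by blast
  then have "a \<noteq> 0"
    using a one by (metis power_0)
  with a show ?thesis
    by (intro that) (auto dest: zdvd_imp_le)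
qed

lemma zeta_int_pow_image:
  assumes "p > 0" "\<sigma> (zeta p) = zeta p ^ a"
  shows "\<sigma> (zeta_int_pow p m) = zeta_int_pow p (int a * m)"
proof -
  have "\<sigma> (zeta_int_pow p m) = zeta p ^ (a * nat (m mod int p))"
    unfolding zeta_int_pow_def by (simp add: power zeta_in_cyc_field assms(2) power_mult)
  also have "\<dots> = zeta_int_pow p (int (a * nat (m mod int p)))"
    using assms(1) by (simp only: zeta_int_pow_of_nat)
  also have "\<dots> = zeta_int_pow p (int a * m)"
    using assms by (simp add: zeta_int_pow_eq_iff cong_def mod_mult_right_eq)
  finally show ?thesis .
qed

lemma map_mat_mult:
  assumes A: "A \<in> carrier_mat n m" and B: "B \<in> carrier_mat m k"
    and AF: "\<And>i j. i < n \<Longrightarrow> j < m \<Longrightarrow> A $$ (i, j) \<in> cyc_field p"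
    and BF: "\<And>i j. i < m \<Longrightarrow> j < k \<Longrightarrow> B $$ (i, j) \<in> cyc_field p"
  shows "map_mat \<sigma> (A * B) = map_mat \<sigma> A * map_mat \<sigma> B"
proof (rule eq_matI)
  fix i j assume "i < dim_row (map_mat \<sigma> A * map_mat \<sigma> B)" "j < dim_col (map_mat \<sigma> A * map_mat \<sigma> B)"
  then have i: "i < n" and j: "j < k"
    using A B by auto
  have "map_mat \<sigma> (A * B) $$ (i, j) = \<sigma> (\<Sum>l<m. A $$ (i, l) * B $$ (l, j))"
    using i j A B by (simp add: scalar_prod_def atLeast0LessThan)
  also have "\<dots> = (\<Sum>l<m. \<sigma> (A $$ (i, l) * B $$ (l, j)))"
    by (rule sum) (use i j AF BF in \<open>auto intro: mult_in_cyc_field\<close>)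
  also have "\<dots> = (\<Sum>l<m. \<sigma> (A $$ (i, l)) * \<sigma> (B $$ (l, j)))"
    using i j AF BF by (auto simp: mult intro!: sum.cong)
  also have "\<dots> = (map_mat \<sigma> A * map_mat \<sigma> B) $$ (i, j)"
    using i j A B by (simp add: scalar_prod_def atLeast0LessThan)
  finally show "map_mat \<sigma> (A * B) $$ (i, j) = (map_mat \<sigma> A * map_mat \<sigma> B) $$ (i, j)" .
qed (use A B in auto)

end

lemma gal_comp:
  assumes "\<sigma> \<in> gal p" "\<rho> \<in> gal p" shows "\<sigma> \<circ> \<rho> \<in> gal p"
proof -
  interpret \<sigma>: gal_aut p \<sigma> by (rule gal_aut.intro) fact
  interpret \<rho>: gal_aut p \<rho> by (rule gal_aut.intro) fact
  have "\<rho> x \<in> cyc_field p" if "x \<in> cyc_field p" for x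
    using \<rho>.bij that by (rule bij_betw_apply)
  moreover have "\<rho> x = x" if "x \<notin> cyc_field p" for x
    using assms(2) that unfolding gal_def by blast
  moreover have "\<sigma> x = x" if "x \<notin> cyc_field p" for x
    using assms(1) that unfolding gal_def by blast
  ultimately show ?thesis
    unfolding gal_def using bij_betw_trans[OF \<rho>.bij \<sigma>.bij] by (simp add: \<rho>.add \<rho>.mult \<sigma>.add \<sigma>.mult)
qed

section \<open>Generation of SL2 by s and t\<close>

inductive_set SL2_span :: "nat \<Rightarrow> (int \<times> int \<times> int \<times> int) set" for p :: nat where
  s_gen: "s_gen p \<in> SL2_span p"
| t_gen: "t_gen p \<in> SL2_span p"
| mult: "g \<in> SL2_span p \<Longrightarrow> h \<in> SL2_span p \<Longrightarrow> SL2_mult p g h \<in> SL2_span p"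

lemma SL2_mult_closed:
  assumes "p > 1" "g \<in> SL2 p" "h \<in> SL2 p"
  shows "SL2_mult p g h \<in> SL2 p"
proof -
  obtain a b c d a' b' c' d' where gh: "g = (a, b, c, d)" "h = (a', b', c', d')"
    by (cases g, cases h) auto
  let ?P = "int p"
  have "((a * a' + b * c') mod ?P * ((c * b' + d * d') mod ?P) -
         (a * b' + b * d') mod ?P * ((c * a' + d * c') mod ?P)) mod ?P
      = ((a * a' + b * c') * (c * b' + d * d') - (a * b' + b * d') * (c * a' + d * c')) mod ?P"
    by (metis mod_diff_eq mod_mult_eq)
  also have "\<dots> = ((a * d - b * c) * (a' * d' - b' * c')) mod ?P"
    by (simp add: algebra_simps)
  also have "\<dots> = ((a * d - b * c) mod ?P * ((a' * d' - b' * c') mod ?P)) mod ?P"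
    by (simp add: mod_simps)
  also have "\<dots> = 1"
    using assms unfolding gh SL2_def by simp
  finally show ?thesis
    using assms(1) unfolding gh SL2_mult_def SL2_def by auto
qed

lemma s_gen_in_SL2: "p > 1 \<Longrightarrow> s_gen p \<in> SL2 p"
proof -
  assume "p > 1"
  then have "(1 + int p * (- 1)) mod int p = 1"
    by (subst mod_mult_self2) simp
  with \<open>p > 1\<close> show ?thesis
    unfolding s_gen_def SL2_def by (auto simp: algebra_simps)
qed

lemma t_gen_in_SL2: "p > 1 \<Longrightarrow> t_gen p \<in> SL2 p"
  unfolding t_gen_def SL2_def by auto

lemma SL2_span_subset:
  assumes "p > 1" shows "SL2_span p \<subseteq> SL2 p"
proof
  fix g assume "g \<in> SL2_span p"
  then show "g \<in> SL2 p"
    by (induction rule: SL2_span.induct) (auto intro: SL2_mult_closed s_gen_in_SL2 t_gen_in_SL2 assms)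
qed

definition SL2_upper :: "nat \<Rightarrow> int \<Rightarrow> int \<times> int \<times> int \<times> int" where
  "SL2_upper p x = (1, x mod int p, 0, 1)"

definition SL2_lower :: "nat \<Rightarrow> int \<Rightarrow> int \<times> int \<times> int \<times> int" where
  "SL2_lower p x = (1, 0, x mod int p, 1)"

lemma SL2_upper_in_span:
  assumes "p > 1" shows "SL2_upper p x \<in> SL2_span p"
proof -
  have "SL2_upper p (int (Suc n)) \<in> SL2_span p" for n
  proof (induction n)
    case 0
    have "SL2_upper p (int (Suc 0)) = t_gen p"
      using assms unfolding SL2_upper_def t_gen_def by simp
    then show ?case by (simp add: SL2_span.t_gen)
  next
    case (Suc n)
    have "SL2_mult p (SL2_upper p (int (Suc n))) (t_gen p) = SL2_upper p (int (Suc (Suc n)))"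
      using assms unfolding SL2_upper_def t_gen_def SL2_mult_def by (simp add: mod_simps add.commute)
    then show ?case
      using SL2_span.mult[OF Suc SL2_span.t_gen] by simp
  qed
  moreover have "SL2_upper p (int (Suc (nat ((x - 1) mod int p)))) = SL2_upper p x"
    using assms unfolding SL2_upper_def by (simp add: mod_simps)
  ultimately show ?thesis by metis
qed

lemma SL2_s_gen_inverse_in_span:
  assumes "p > 1" shows "(0, 1, int p - 1, 0) \<in> SL2_span p"
proof -
  have "((int p - 1) * (int p - 1)) mod int p = 1"
  proof -
    have "(int p - 1) * (int p - 1) = 1 + int p * (int p - 2)"
      by (simp add: algebra_simps)
    then show ?thesis using assms by simp
  qed
  moreover have "(- 1) mod int p = int p - 1"
    using assms by (simp add: zmod_zminus1_eq_if)
  ultimately have "SL2_mult p (SL2_mult p (s_gen p) (s_gen p)) (s_gen p) = (0, 1, int p - 1, 0)"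
    using assms unfolding s_gen_def SL2_mult_def by simp
  then show ?thesis
    by (metis SL2_span.mult SL2_span.s_gen)
qed

lemma SL2_lower_in_span:
  assumes "p > 1" shows "SL2_lower p x \<in> SL2_span p"
proof -
  let ?P = "int p"
  have "- ((?P - 1) * x) = x + (- x) * ?P"
    by (simp add: algebra_simps)
  then have "(- ((?P - 1) * x)) mod ?P = x mod ?P"
    by (simp only: mod_mult_self1)
  then have "SL2_mult p (SL2_mult p (0, 1, ?P - 1, 0) (SL2_upper p (- x))) (s_gen p) = SL2_lower p x"
    using assms unfolding s_gen_def SL2_upper_def SL2_lower_def SL2_mult_def by (simp add: mod_simps)
  then show ?thesis
    by (metis SL2_span.mult SL2_span.s_gen SL2_s_gen_inverse_in_span SL2_upper_in_span assms)
qed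

lemma SL2_upper_lower_upper:
  "SL2_mult p (SL2_mult p (SL2_upper p u) (SL2_lower p c)) (SL2_upper p v) =
     ((1 + u * c) mod int p, ((1 + u * c) * v + u) mod int p, c mod int p, (c * v + 1) mod int p)"
  unfolding SL2_upper_def SL2_lower_def SL2_mult_def
  by (simp add: mod_simps)
    (intro conjI; simp only: cong_def [symmetric]; intro cong_add cong_mult cong_mod_leftI cong_refl)

lemma mod_eq_if_cong: "[y = x] (mod m) \<Longrightarrow> 0 \<le> x \<Longrightarrow> x < m \<Longrightarrow> y mod m = x"
  for x y m :: int
  by (simp add: cong_def)

lemma SL2_in_span_if_lower_left_nonzero:
  assumes p: "prime p" and g: "(a, b, c, d) \<in> SL2 p" and "c \<noteq> 0"
  shows "(a, b, c, d) \<in> SL2_span p"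
proof -
  let ?P = "int p"
  have range: "a \<in> {0..<?P}" "b \<in> {0..<?P}" "c \<in> {0..<?P}" "d \<in> {0..<?P}"
    and det: "[a * d - b * c = 1] (mod ?P)"
    using g prime_gt_1_nat[OF p] unfolding SL2_def cong_def by auto
  have "coprime c ?P"
    using range(3) \<open>c \<noteq> 0\<close> p
    by (metis atLeastLessThan_iff coprime_commute prime_imp_coprime prime_nat_int_transfer zdvd_not_zless
        order_le_neq_trans)
  then obtain ci where ci: "[c * ci = 1] (mod ?P)"
    using cong_solve_coprime_int by blast
  \<comment> \<open>\<open>g = SL2_upper ((a - 1) / c) * SL2_lower c * SL2_upper ((d - 1) / c)\<close>, dividing mod \<open>p\<close>\<close>
  define u where "u = (a - 1) * ci"
  define v where "v = (d - 1) * ci"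
  have uc: "[u * c = a - 1] (mod ?P)"
    using cong_mult[OF cong_refl[of "a - 1"] ci] by (simp add: u_def mult_ac)
  have cv: "[c * v = d - 1] (mod ?P)"
    using cong_mult[OF cong_refl[of "d - 1"] ci] by (simp add: v_def mult_ac)
  have a: "[1 + u * c = a] (mod ?P)"
    using cong_add[OF cong_refl[of 1] uc] by simp
  have d: "[c * v + 1 = d] (mod ?P)"
    using cong_add[OF cv cong_refl[of 1]] by simp
  have "c * ((1 + u * c) * v + u) = (1 + u * c) * (c * v) + u * c"
    by (simp add: algebra_simps)
  also have "[\<dots> = a * (d - 1) + (a - 1)] (mod ?P)"
    using a cv uc by (intro cong_add cong_mult)
  also have "a * (d - 1) + (a - 1) = (a * d - b * c - 1) + c * b"
    by (simp add: algebra_simps)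
  also have "[\<dots> = 0 + c * b] (mod ?P)"
    using cong_diff[OF det cong_refl[of 1]] by (intro cong_add cong_refl) simp
  finally have "[(1 + u * c) * v + u = b] (mod ?P)"
    using cong_mult_lcancel[OF \<open>coprime c ?P\<close>] by simp
  then have "SL2_mult p (SL2_mult p (SL2_upper p u) (SL2_lower p c)) (SL2_upper p v) = (a, b, c, d)"
    unfolding SL2_upper_lower_upper using range a d by (simp add: mod_eq_if_cong)
  then show ?thesis
    using p by (metis SL2_span.mult SL2_upper_in_span SL2_lower_in_span prime_gt_1_nat)
qed

lemma SL2_subset_span:
  assumes p: "prime p" shows "SL2 p \<subseteq> SL2_span p"
proof
  fix g assume g: "g \<in> SL2 p"
  obtain a b c d where g_eq: "g = (a, b, c, d)"
    by (cases g) auto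
  have p1: "p > 1"
    using p prime_gt_1_nat by blast
  show "g \<in> SL2_span p"
  proof (cases "c = 0")
    case False
    then show ?thesis
      using SL2_in_span_if_lower_left_nonzero p g unfolding g_eq by blast
  next
    case True
    let ?P = "int p"
    have range: "a \<in> {0..<?P}" "b \<in> {0..<?P}" "d \<in> {0..<?P}" and "(a * d) mod ?P = 1"
      using g True unfolding g_eq SL2_def by auto
    then have "d \<noteq> 0"
      using p1 by auto
    \<comment> \<open>\<open>g s\<close> has lower left entry \<open>d \<noteq> 0\<close>, and \<open>g = (g s) s\<^sup>-\<^sup>1\<close>\<close>
    have gs: "SL2_mult p g (s_gen p) = (b, (a * (?P - 1)) mod ?P, d, 0)"
      using range unfolding g_eq True s_gen_def SL2_mult_def by simp
    have "SL2_mult p g (s_gen p) \<in> SL2 p"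
      using SL2_mult_closed[OF p1 g s_gen_in_SL2[OF p1]] .
    then have "SL2_mult p g (s_gen p) \<in> SL2_span p"
      using SL2_in_span_if_lower_left_nonzero[OF p] \<open>d \<noteq> 0\<close> unfolding gs by blast
    moreover have "(a * (?P - 1) * (?P - 1)) mod ?P = a"
    proof -
      have "a * (?P - 1) * (?P - 1) = a + (a * (?P - 2)) * ?P"
        by (simp add: algebra_simps)
      then show ?thesis
        using range(1) by simp
    qed
    then have "SL2_mult p (b, (a * (?P - 1)) mod ?P, d, 0) (0, 1, ?P - 1, 0) = g"
      using range unfolding g_eq True SL2_mult_def by (simp add: mod_simps)
    ultimately show ?thesis
      using SL2_span.mult SL2_s_gen_inverse_in_span[OF p1] unfolding gs by metis
  qed
qed

section \<open>Permutation matrices\<close>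

definition perm_matrix :: "nat \<Rightarrow> (nat \<Rightarrow> nat) \<Rightarrow> 'a :: semiring_1 mat" where
  "perm_matrix n \<pi> = mat n n (\<lambda>(i, j). if \<pi> i = j then 1 else 0)"

lemma perm_mat_iff: "perm_mat n P \<longleftrightarrow> (\<exists>\<pi>. \<pi> permutes {..<n} \<and> P = perm_matrix n \<pi>)"
  unfolding perm_mat_def perm_matrix_def ..

lemma perm_matrix_carrier: "perm_matrix n \<pi> \<in> carrier_mat n n"
  unfolding perm_matrix_def by simp

lemma permutes_lessThan_less: "\<pi> permutes {..<n} \<Longrightarrow> i < n \<Longrightarrow> \<pi> i < n"
  using permutes_in_image[of \<pi> "{..<n}" i] by simp

lemma perm_matrix_mult:
  assumes \<pi>: "\<pi> permutes {..<n}" and M: "M \<in> carrier_mat n m"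
  shows "perm_matrix n \<pi> * M = mat n m (\<lambda>(i, j). M $$ (\<pi> i, j))"
proof (rule eq_matI)
  fix i j
  assume "i < dim_row (mat n m (\<lambda>(i, j). M $$ (\<pi> i, j)))"
    and "j < dim_col (mat n m (\<lambda>(i, j). M $$ (\<pi> i, j)))"
  then have i: "i < n" and j: "j < m" by auto
  have "(perm_matrix n \<pi> * M) $$ (i, j) = (\<Sum>l<n. (if \<pi> i = l then 1 else 0) * M $$ (l, j))"
    using i j M by (simp add: perm_matrix_def scalar_prod_def atLeast0LessThan)
  also have "\<dots> = (\<Sum>l<n. if \<pi> i = l then M $$ (l, j) else 0)"
    by (rule sum.cong) auto
  also have "\<dots> = M $$ (\<pi> i, j)"
    using permutes_lessThan_less[OF \<pi> i] by simp
  finally show "(perm_matrix n \<pi> * M) $$ (i, j) = mat n m (\<lambda>(i, j). M $$ (\<pi> i, j)) $$ (i, j)"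
    using i j by simp
qed (use M in \<open>auto simp: perm_matrix_def\<close>)

lemma mult_perm_matrix:
  assumes \<pi>: "\<pi> permutes {..<n}" and M: "M \<in> carrier_mat m n"
  shows "M * perm_matrix n \<pi> = mat m n (\<lambda>(i, j). M $$ (i, inv_into UNIV \<pi> j))"
proof (rule eq_matI)
  fix i j
  assume "i < dim_row (mat m n (\<lambda>(i, j). M $$ (i, inv_into UNIV \<pi> j)))"
    and "j < dim_col (mat m n (\<lambda>(i, j). M $$ (i, inv_into UNIV \<pi> j)))"
  then have i: "i < m" and j: "j < n" by auto
  have "(M * perm_matrix n \<pi>) $$ (i, j) = (\<Sum>l<n. M $$ (i, l) * (if \<pi> l = j then 1 else 0))"
    using i j M by (simp add: perm_matrix_def scalar_prod_def atLeast0LessThan)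
  also have "\<dots> = (\<Sum>l<n. if l = inv_into UNIV \<pi> j then M $$ (i, l) else 0)"
    by (rule sum.cong) (auto simp: permutes_inv_eq[OF \<pi>] permutes_inverses[OF \<pi>])
  also have "\<dots> = M $$ (i, inv_into UNIV \<pi> j)"
    using permutes_lessThan_less[OF permutes_inv[OF \<pi>] j] by simp
  finally show "(M * perm_matrix n \<pi>) $$ (i, j) = mat m n (\<lambda>(i, j). M $$ (i, inv_into UNIV \<pi> j)) $$ (i, j)"
    using i j by simp
qed (use M in \<open>auto simp: perm_matrix_def\<close>)

lemma map_mat_mult_perm_matrix:
  assumes \<pi>: "\<pi> permutes {..<n}" and M: "M \<in> carrier_mat n n"
    and f: "\<And>i l. i < n \<Longrightarrow> l < n \<Longrightarrow> f (M $$ (i, l)) = M $$ (\<pi> i, \<pi> l)"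
  shows "map_mat f M * perm_matrix n \<pi> = perm_matrix n \<pi> * M"
proof -
  have "map_mat f M * perm_matrix n \<pi> = mat n n (\<lambda>(i, j). f (M $$ (i, inv_into UNIV \<pi> j)))"
    using M permutes_lessThan_less[OF permutes_inv[OF \<pi>]]
    by (subst mult_perm_matrix[OF \<pi>]) (auto intro!: eq_matI)
  also have "\<dots> = mat n n (\<lambda>(i, j). M $$ (\<pi> i, j))"
    using f permutes_lessThan_less[OF permutes_inv[OF \<pi>]]
    by (auto simp: permutes_inverses[OF \<pi>] intro!: eq_matI)
  also have "\<dots> = perm_matrix n \<pi> * M"
    using perm_matrix_mult[OF \<pi> M] ..
  finally show ?thesis .
qed

lemma intertwines_mult:
  assumes "A \<in> carrier_mat n n" "A' \<in> carrier_mat n n" "B \<in> carrier_mat n n" "B' \<in> carrier_mat n n"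
    "P \<in> carrier_mat n n" and "A * P = P * B" "A' * P = P * B'"
  shows "A * A' * P = P * (B * B')"
proof -
  have "A * A' * P = A * (P * B')"
    using assms by (simp add: assoc_mult_mat[of A n n A' n P n])
  also have "\<dots> = P * B * B'"
    using assms by (simp flip: assoc_mult_mat[of A n n P n B' n])
  finally show ?thesis
    using assms by (simp add: assoc_mult_mat[of P n n B n B' n])
qed

lemma eq_conj_if_intertwines:
  assumes A: "A \<in> carrier_mat n n" and P: "P \<in> carrier_mat n n"
    and AP: "A * P = P * B" and "inverts_mat P Q" "inverts_mat Q P"
  shows "A = P * B * Q"
proof -
  have PQ: "P * Q = 1\<^sub>m n"
    using assms(4) P unfolding inverts_mat_def by simp
  have Q: "Q \<in> carrier_mat n n"
    using arg_cong[OF PQ, of dim_col] arg_cong[OF assms(5)[unfolded inverts_mat_def], of dim_col] P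
    by auto
  have "P * B * Q = A * P * Q"
    using AP by simp
  also have "\<dots> = A * (P * Q)"
    using A P Q by (rule assoc_mult_mat)
  finally show ?thesis
    using A PQ by simp
qed

section \<open>Congruence up to sign\<close>

definition cong_pm :: "int \<Rightarrow> int \<Rightarrow> int \<Rightarrow> bool" where
  "cong_pm m x y \<longleftrightarrow> [x = y] (mod m) \<or> [x = - y] (mod m)"

lemma cong_pm_refl [simp]: "cong_pm m x x"
  unfolding cong_pm_def by simp

lemma cong_pm_mult: "cong_pm m x x' \<Longrightarrow> cong_pm m y y' \<Longrightarrow> cong_pm m (x * y) (x' * y')"
  unfolding cong_pm_def by (elim disjE) (auto dest: cong_mult)

lemma cong_pm_square: "cong_pm m x y \<Longrightarrow> [x ^ 2 = y ^ 2] (mod m)"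
  unfolding cong_pm_def by (elim disjE) (auto dest: cong_pow[where n = 2])

lemma cong_pm_if_cong_square:
  assumes "prime m" "[x ^ 2 = y ^ 2] (mod m)" shows "cong_pm m x y"
proof -
  have "m dvd (x - y) * (x + y)"
    using assms(2) unfolding cong_iff_dvd_diff by (simp add: algebra_simps power2_eq_square)
  then show ?thesis
    using assms(1) unfolding cong_pm_def cong_iff_dvd_diff by (simp add: prime_dvd_mult_iff)
qed

lemma eq_if_cong_pm_le_half:
  assumes "p > 0" "j \<le> (p - 1) div 2" "k \<le> (p - 1) div 2" "cong_pm (int p) (int j) (int k)"
  shows "j = k"
proof -
  have "j + k < p"
    using assms(1-3) by presburger
  then have "int j + int k < int p"
    by simp
  with assms(4) show ?thesis
    unfolding cong_pm_def
  proof (elim disjE)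
    assume "[int j = int k] (mod int p)"
    then show "j = k"
      using cong_less_imp_eq_int[of "int j" "int p" "int k"] \<open>int j + int k < int p\<close> by simp
  next
    assume "[int j = - int k] (mod int p)"
    then have "int p dvd int j + int k"
      by (simp add: cong_iff_dvd_diff)
    then have "\<not> 0 < int j + int k"
      using \<open>int j + int k < int p\<close> zdvd_not_zless by blast
    then show "j = k"
      by simp
  qed
qed

lemma eq_if_cong_square_le_half:
  assumes "prime p" "j \<le> (p - 1) div 2" "k \<le> (p - 1) div 2" "[int j ^ 2 = int k ^ 2] (mod int p)"
  shows "j = k"
proof -
  have "cong_pm (int p) (int j) (int k)"
    using assms(1,4) by (simp add: cong_pm_if_cong_square)
  then show ?thesis
    using assms(1-3) prime_gt_0_nat eq_if_cong_pm_le_half by blast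
qed

definition half_rep :: "nat \<Rightarrow> int \<Rightarrow> nat" where
  "half_rep p x = nat (min (x mod int p) (int p - x mod int p))"

lemma half_rep_le:
  assumes "odd p" shows "half_rep p x \<le> (p - 1) div 2"
proof -
  obtain r where p: "p = 2 * r + 1"
    using assms by (elim oddE)
  have "min m (int p - m) \<le> int r" for m
    using p by (simp add: min_def)
  then show ?thesis
    unfolding half_rep_def p by (simp add: nat_le_iff)
qed

lemma cong_pm_half_rep:
  assumes "p > 0" shows "cong_pm (int p) (int (half_rep p x)) x"
proof -
  have m: "0 \<le> x mod int p" "x mod int p < int p" "[x mod int p = x] (mod int p)"
    using assms by (simp_all add: cong_def)
  then have "[int p - x mod int p = 0 - x] (mod int p)"
    by (intro cong_diff) (simp_all add: cong_def)
  with m show ?thesis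
    unfolding half_rep_def cong_pm_def min_def by auto
qed

lemma half_rep_0 [simp]: "half_rep p 0 = 0"
  unfolding half_rep_def by simp

section \<open>The Galois action on the Weil representation\<close>

lemma theta_eq_zeta_int_pow: "p > 0 \<Longrightarrow> theta p c j = zeta_int_pow p (c * int j ^ 2)"
  unfolding theta_def Qf_def by (rule e_of_int_divide)

lemma gauss_eq_sum_zeta_int_pow: "p > 0 \<Longrightarrow> gauss p c = (\<Sum>x\<in>{0..<int p}. zeta_int_pow p (c * x ^ 2))"
  unfolding gauss_def Qf_def by (rule sum.cong [OF refl]) (rule e_of_int_divide)

lemma Bf_eq: "Bf p c x y = of_int (2 * c * x * y) / real p"
  unfolding Bf_def Qf_def by (simp add: diff_divide_distrib [symmetric] algebra_simps power2_eq_square)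

lemma e_Bf_pair_eq_zeta_int_pow:
  assumes "p > 0"
  shows "e (- Bf p c x y) + e (Bf p c x y) = zeta_int_pow p (- (2 * c * x * y)) + zeta_int_pow p (2 * c * x * y)"
  using e_of_int_divide[OF assms, of "- (2 * c * x * y)"] e_of_int_divide[OF assms, of "2 * c * x * y"]
  unfolding Bf_eq by simp

lemma zeta_int_pow_pair_cong_pm:
  assumes "p > 0" "cong_pm (int p) y x"
  shows "zeta_int_pow p (- y) + zeta_int_pow p y = zeta_int_pow p (- x) + zeta_int_pow p x"
  using assms(2) unfolding cong_pm_def
proof (elim disjE)
  assume "[y = x] (mod int p)"
  then have "zeta_int_pow p (- y) = zeta_int_pow p (- x)" "zeta_int_pow p y = zeta_int_pow p x"
    using assms(1) by (simp_all add: zeta_int_pow_eq_iff cong_minus_minus_iff)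
  then show ?thesis
    by simp
next
  assume "[y = - x] (mod int p)"
  moreover have "[- y = x] (mod int p)"
    using calculation cong_minus_minus_iff by (metis minus_minus)
  ultimately have "zeta_int_pow p (- y) = zeta_int_pow p x" "zeta_int_pow p y = zeta_int_pow p (- x)"
    using assms(1) by (simp_all add: zeta_int_pow_eq_iff)
  then show ?thesis
    by simp
qed

lemma not_dvd_if_one_or_nonresidue:
  assumes "prime p" "c = 1 \<or> \<not> QuadRes (int p) c" shows "\<not> int p dvd c"
proof
  assume dvd: "int p dvd c"
  show False
  proof (cases "c = 1")
    case True
    then show False
      using dvd prime_gt_1_nat[OF assms(1)] by simp
  next
    case False
    then have "\<not> QuadRes (int p) c"
      using assms(2) by simp
    moreover have "[0 ^ 2 = c] (mod int p)"
      using dvd by (simp add: cong_def)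
    ultimately show False
      unfolding QuadRes_def by blast
  qed
qed

locale theta_galois =
  fixes p :: nat and c :: int and \<gamma> :: "complex \<Rightarrow> complex" and a :: nat
  assumes prime: "prime p" and odd: "odd p" and c_not_dvd: "\<not> int p dvd c"
    and gal: "\<gamma> \<in> gal p" and a_not_dvd: "\<not> int p dvd int a" and \<gamma>_zeta: "\<gamma> (zeta p) = zeta p ^ a"
begin

definition r :: nat where "r = (p - 1) div 2"

definition \<tau> :: "complex \<Rightarrow> complex" where "\<tau> = \<gamma> \<circ> \<gamma>"

definition \<pi> :: "nat \<Rightarrow> nat" where "\<pi> j = (if j \<le> r then half_rep p (int a * int j) else j)"

sublocale \<gamma>: gal_aut p \<gamma>
  by (rule gal_aut.intro) (rule gal)

sublocale \<tau>: gal_aut p \<tau>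
  unfolding \<tau>_def by (rule gal_aut.intro) (intro gal_comp gal)

lemma p_pos: "p > 0"
  using prime prime_gt_0_nat by blast

lemma r_pos: "r > 0"
  using prime odd prime_ge_2_nat[OF prime] unfolding r_def by (cases "p = 2") auto

lemma coprime_c: "coprime c (int p)"
  using prime_imp_coprime[of "int p" c] prime c_not_dvd by (simp add: coprime_commute)

lemma coprime_a: "coprime (int a) (int p)"
  using prime_imp_coprime[of "int p" "int a"] prime a_not_dvd by (simp add: coprime_commute)

lemma tau_zeta_int_pow: "\<tau> (zeta_int_pow p m) = zeta_int_pow p (int a * int a * m)"
  unfolding \<tau>_def using \<gamma>.zeta_int_pow_image[OF p_pos \<gamma>_zeta] by (simp add: mult.assoc)

lemma theta_inj:
  assumes "j \<le> r" "k \<le> r" "theta p c j = theta p c k" shows "j = k"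
proof -
  have "[c * int j ^ 2 = c * int k ^ 2] (mod int p)"
    using assms(3) p_pos by (simp add: theta_eq_zeta_int_pow zeta_int_pow_eq_iff)
  then have "[int j ^ 2 = int k ^ 2] (mod int p)"
    using cong_mult_lcancel[OF coprime_c] by blast
  then show ?thesis
    using eq_if_cong_square_le_half[OF prime] assms(1,2) unfolding r_def by blast
qed

lemma \<pi>_cong_pm: "j \<le> r \<Longrightarrow> cong_pm (int p) (int (\<pi> j)) (int a * int j)"
  unfolding \<pi>_def using cong_pm_half_rep[OF p_pos] by simp

lemma \<pi>_square_cong: "j \<le> r \<Longrightarrow> [int (\<pi> j) ^ 2 = int a ^ 2 * int j ^ 2] (mod int p)"
  using cong_pm_square[OF \<pi>_cong_pm] by (simp add: power_mult_distrib)

lemma \<pi>_le: "j \<le> r \<Longrightarrow> \<pi> j \<le> r"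
  unfolding \<pi>_def r_def using half_rep_le[OF odd] by simp

lemma \<pi>_inj:
  assumes "j \<le> r" "k \<le> r" "\<pi> j = \<pi> k" shows "j = k"
proof -
  have "[int a ^ 2 * int j ^ 2 = int a ^ 2 * int k ^ 2] (mod int p)"
    using \<pi>_square_cong[OF assms(1)] \<pi>_square_cong[OF assms(2)] assms(3)
    by (metis cong_sym cong_trans)
  moreover have "coprime (int a ^ 2) (int p)"
    using coprime_a by simp
  ultimately have "[int j ^ 2 = int k ^ 2] (mod int p)"
    using cong_mult_lcancel by blast
  then show ?thesis
    using eq_if_cong_square_le_half[OF prime] assms(1,2) unfolding r_def by blast
qed

lemma \<pi>_permutes: "\<pi> permutes {..<r + 1}"
proof (rule bij_imp_permutes)
  have "inj_on \<pi> {..<r + 1}"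
    using \<pi>_inj by (auto simp: inj_on_def)
  moreover have "\<pi> ` {..<r + 1} \<subseteq> {..<r + 1}"
    using \<pi>_le by (auto simp: less_Suc_eq_le)
  ultimately show "bij_betw \<pi> {..<r + 1} {..<r + 1}"
    by (simp add: bij_betw_def endo_inj_surj)
qed (simp add: \<pi>_def)

lemma \<pi>_0 [simp]: "\<pi> 0 = 0"
  unfolding \<pi>_def by simp

lemma tau_theta:
  assumes "j \<le> r" shows "\<tau> (theta p c j) = theta p c (\<pi> j)"
proof -
  have "[c * int (\<pi> j) ^ 2 = c * (int a ^ 2 * int j ^ 2)] (mod int p)"
    using \<pi>_square_cong[OF assms] by (rule cong_scalar_left)
  then have "[int a * int a * (c * int j ^ 2) = c * int (\<pi> j) ^ 2] (mod int p)"
    by (simp add: cong_sym_eq power2_eq_square mult_ac)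
  then show ?thesis
    using p_pos by (simp add: theta_eq_zeta_int_pow tau_zeta_int_pow zeta_int_pow_eq_iff)
qed

lemma tau_gauss: "\<tau> (gauss p c) = gauss p c"
proof -
  define h where "h x = (int a * x) mod int p" for x
  have "inj_on h {0..<int p}"
  proof
    fix x y assume "x \<in> {0..<int p}" "y \<in> {0..<int p}" "h x = h y"
    then show "x = y"
      using cong_mult_lcancel[OF coprime_a, of x y] cong_less_imp_eq_int[of x "int p" y]
      unfolding h_def cong_def by auto
  qed
  moreover have "h ` {0..<int p} \<subseteq> {0..<int p}"
    unfolding h_def using p_pos by auto
  ultimately have h: "bij_betw h {0..<int p} {0..<int p}"
    by (simp add: bij_betw_def endo_inj_surj)
  have "\<tau> (zeta_int_pow p (c * x ^ 2)) = zeta_int_pow p (c * h x ^ 2)" for x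
  proof -
    have "[c * h x ^ 2 = c * (int a * x) ^ 2] (mod int p)"
      unfolding h_def by (intro cong_scalar_left cong_pow) (simp add: cong_def)
    then show ?thesis
      using p_pos by (simp add: tau_zeta_int_pow zeta_int_pow_eq_iff cong_sym_eq power_mult_distrib
          power2_eq_square mult_ac)
  qed
  then have "\<tau> (gauss p c) = (\<Sum>x\<in>{0..<int p}. zeta_int_pow p (c * h x ^ 2))"
    using p_pos by (simp add: gauss_eq_sum_zeta_int_pow \<tau>.sum zeta_int_pow_in_cyc_field)
  also have "\<dots> = gauss p c"
    using p_pos sum.reindex_bij_betw[OF h, of "\<lambda>y. zeta_int_pow p (c * y ^ 2)"]
    by (simp add: gauss_eq_sum_zeta_int_pow)
  finally show ?thesis .
qed

lemma theta_in_cyc_field: "theta p c j \<in> cyc_field p"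
  using p_pos by (simp add: theta_eq_zeta_int_pow zeta_int_pow_in_cyc_field)

lemma gauss_in_cyc_field: "gauss p c \<in> cyc_field p"
  using p_pos by (simp add: gauss_eq_sum_zeta_int_pow sum_in_cyc_field zeta_int_pow_in_cyc_field)

lemma tau_divide_gauss: "x \<in> cyc_field p \<Longrightarrow> \<tau> (x / gauss p c) = \<tau> x / gauss p c"
  by (simp add: \<tau>.divide gauss_in_cyc_field tau_gauss)

lemma Vmat_carrier: "Vmat p c \<in> carrier_mat (r + 1) (r + 1)"
  and Smat_carrier: "Smat p c \<in> carrier_mat (r + 1) (r + 1)"
  and Tmat_carrier: "Tmat p c \<in> carrier_mat (r + 1) (r + 1)"
  unfolding Vmat_def Smat_def Tmat_def Let_def r_def by simp_all

lemma Vmat_index: "i < r + 1 \<Longrightarrow> k < r + 1 \<Longrightarrow> Vmat p c $$ (i, k) = theta p c i ^ k"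
  unfolding Vmat_def Let_def r_def [symmetric] by simp

lemma Tmat_index:
  "i < r + 1 \<Longrightarrow> k < r + 1 \<Longrightarrow> Tmat p c $$ (i, k) = (if i = k then theta p c i else 0)"
  unfolding Tmat_def Let_def r_def [symmetric] by simp

lemma Smat_index:
  "i < r + 1 \<Longrightarrow> k < r + 1 \<Longrightarrow> Smat p c $$ (i, k) =
     (if k = 0 then 1 / gauss p c
      else if i = 0 then 2 / gauss p c
      else (zeta_int_pow p (- (2 * c * int i * int k)) + zeta_int_pow p (2 * c * int i * int k)) / gauss p c)"
  unfolding Smat_def Let_def r_def [symmetric] using e_Bf_pair_eq_zeta_int_pow[OF p_pos] by simp

lemma tau_Vmat: "map_mat \<tau> (Vmat p c) = perm_matrix (r + 1) \<pi> * Vmat p c"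
proof -
  have "map_mat \<tau> (Vmat p c) $$ (i, k) = Vmat p c $$ (\<pi> i, k)" if "i < r + 1" "k < r + 1" for i k
    using that \<pi>_le[of i] Vmat_carrier
    by (simp add: Vmat_index \<tau>.power theta_in_cyc_field tau_theta)
  then show ?thesis
    unfolding perm_matrix_mult[OF \<pi>_permutes Vmat_carrier] using Vmat_carrier by (auto intro!: eq_matI)
qed

lemma perm_matrix_unique:
  assumes "perm_mat (r + 1) Q" "map_mat \<tau> (Vmat p c) = Q * Vmat p c"
  shows "Q = perm_matrix (r + 1) \<pi>"
proof -
  obtain \<rho> where \<rho>: "\<rho> permutes {..<r + 1}" and Q: "Q = perm_matrix (r + 1) \<rho>"
    using assms(1) unfolding perm_mat_iff by blast
  have "\<rho> j = \<pi> j" if j: "j < r + 1" for j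
  proof -
    have \<rho>j: "\<rho> j < r + 1"
      using permutes_lessThan_less[OF \<rho> j] .
    have "theta p c (\<rho> j) = (Q * Vmat p c) $$ (j, 1)"
      unfolding Q perm_matrix_mult[OF \<rho> Vmat_carrier] using j \<rho>j r_pos by (simp add: Vmat_index)
    also have "\<dots> = \<tau> (theta p c j)"
      unfolding assms(2) [symmetric] using j r_pos Vmat_carrier by (simp add: Vmat_index)
    also have "\<dots> = theta p c (\<pi> j)"
      using j by (simp add: tau_theta)
    finally have "theta p c (\<rho> j) = theta p c (\<pi> j)" .
    moreover have "\<rho> j \<le> r" "\<pi> j \<le> r"
      using j \<rho>j \<pi>_le by (simp_all add: less_Suc_eq_le)
    ultimately show ?thesis
      using theta_inj by blast
  qed
  moreover have "\<rho> j = \<pi> j" if "j \<notin> {..<r + 1}" for j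
    using permutes_not_in[OF \<rho> that] permutes_not_in[OF \<pi>_permutes that] by simp
  ultimately have "\<rho> = \<pi>"
    by (auto simp: fun_eq_iff)
  then show ?thesis
    using Q by simp
qed

lemma tau_Tmat_index:
  assumes "i < r + 1" "k < r + 1"
  shows "\<tau> (Tmat p c $$ (i, k)) = Tmat p c $$ (\<pi> i, \<pi> k)"
  using assms \<pi>_inj[of i k] \<pi>_le[of i] \<pi>_le[of k]
  by (auto simp: Tmat_index tau_theta less_Suc_eq_le)

lemma tau_Smat_index:
  assumes i: "i < r + 1" and k: "k < r + 1"
  shows "\<tau> (Smat p c $$ (i, k)) = Smat p c $$ (\<pi> i, \<pi> k)"
proof -
  have \<pi>_less: "\<pi> i < r + 1" "\<pi> k < r + 1"
    using i k \<pi>_le by (simp_all add: less_Suc_eq_le)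
  have \<pi>_eq_0: "\<pi> i = 0 \<longleftrightarrow> i = 0" "\<pi> k = 0 \<longleftrightarrow> k = 0"
    using i k \<pi>_inj[of i 0] \<pi>_inj[of k 0] by (auto simp: less_Suc_eq_le)
  define x where "x = 2 * c * int i * int k"
  define y where "y = 2 * c * int (\<pi> i) * int (\<pi> k)"
  have "cong_pm (int p) (2 * c * (int (\<pi> i) * int (\<pi> k))) (2 * c * ((int a * int i) * (int a * int k)))"
    using i k by (intro cong_pm_mult cong_pm_refl \<pi>_cong_pm) (simp_all add: less_Suc_eq_le)
  then have "cong_pm (int p) y (int a * int a * x)"
    unfolding x_def y_def by (simp add: mult_ac)
  then have "\<tau> (zeta_int_pow p (- x) + zeta_int_pow p x) = zeta_int_pow p (- y) + zeta_int_pow p y"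
    using zeta_int_pow_pair_cong_pm[OF p_pos]
    by (simp add: \<tau>.add zeta_int_pow_in_cyc_field tau_zeta_int_pow)
  then show ?thesis
    using i k \<pi>_less \<pi>_eq_0 unfolding x_def y_def
    by (simp add: Smat_index tau_divide_gauss one_in_cyc_field two_in_cyc_field add_in_cyc_field
        zeta_int_pow_in_cyc_field)
qed

lemma map_mat_tau_intertwines:
  assumes \<xi>: "is_xi p c \<xi>" and g: "g \<in> SL2 p"
  shows "map_mat \<tau> (\<xi> g) * perm_matrix (r + 1) \<pi> = perm_matrix (r + 1) \<pi> * \<xi> g"
proof -
  have carrier: "\<And>g. g \<in> SL2 p \<Longrightarrow> \<xi> g \<in> carrier_mat (r + 1) (r + 1)"
    and entries: "\<And>g i j. g \<in> SL2 p \<Longrightarrow> i < r + 1 \<Longrightarrow> j < r + 1 \<Longrightarrow> \<xi> g $$ (i, j) \<in> cyc_field p"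
    and hom: "\<And>g h. g \<in> SL2 p \<Longrightarrow> h \<in> SL2 p \<Longrightarrow> \<xi> (SL2_mult p g h) = \<xi> g * \<xi> h"
    and \<xi>_s: "\<xi> (s_gen p) = Smat p c" and \<xi>_t: "\<xi> (t_gen p) = Tmat p c"
    using \<xi> unfolding is_xi_def Let_def r_def [symmetric] by blast+
  have "g \<in> SL2_span p"
    using SL2_subset_span[OF prime] g ..
  then show ?thesis
  proof (induction rule: SL2_span.induct)
    case s_gen
    show ?case
      unfolding \<xi>_s by (rule map_mat_mult_perm_matrix[OF \<pi>_permutes Smat_carrier tau_Smat_index])
  next
    case t_gen
    show ?case
      unfolding \<xi>_t by (rule map_mat_mult_perm_matrix[OF \<pi>_permutes Tmat_carrier tau_Tmat_index])
  next
    case (mult g h)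
    have gh: "g \<in> SL2 p" "h \<in> SL2 p"
      using mult.hyps SL2_span_subset[OF prime_gt_1_nat[OF prime]] by auto
    have "map_mat \<tau> (\<xi> (SL2_mult p g h)) = map_mat \<tau> (\<xi> g) * map_mat \<tau> (\<xi> h)"
      unfolding hom[OF gh] by (rule \<tau>.map_mat_mult[OF carrier carrier]) (use gh entries in auto)
    moreover have "map_mat \<tau> (\<xi> g) * map_mat \<tau> (\<xi> h) * perm_matrix (r + 1) \<pi>
        = perm_matrix (r + 1) \<pi> * (\<xi> g * \<xi> h)"
      using carrier[OF gh(1)] carrier[OF gh(2)]
      by (intro intertwines_mult[OF _ _ _ _ perm_matrix_carrier mult.IH]) simp_all
    ultimately show ?case
      unfolding hom[OF gh] by simp
  qed
qed

lemma tau_image_theta: "\<tau> ` theta p c ` {..<r + 1} = theta p c ` {..<r + 1}"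
proof -
  have "\<tau> ` theta p c ` {..<r + 1} = theta p c ` \<pi> ` {..<r + 1}"
    unfolding image_image by (rule image_cong) (simp_all add: tau_theta less_Suc_eq_le)
  also have "\<pi> ` {..<r + 1} = {..<r + 1}"
    by (rule permutes_image[OF \<pi>_permutes])
  finally show ?thesis .
qed

lemma ex1_perm_mat_tau_Vmat: "\<exists>!P. perm_mat (r + 1) P \<and> map_mat \<tau> (Vmat p c) = P * Vmat p c"
proof (rule ex1I)
  show "perm_mat (r + 1) (perm_matrix (r + 1) \<pi>)
      \<and> map_mat \<tau> (Vmat p c) = perm_matrix (r + 1) \<pi> * Vmat p c"
    using \<pi>_permutes tau_Vmat unfolding perm_mat_iff by blast
qed (use perm_matrix_unique in blast)

end

theorem theorem2:
  fixes p :: nat and c :: int and \<xi> :: "int \<times> int \<times> int \<times> int \<Rightarrow> complex mat"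
    and \<gamma> :: "complex \<Rightarrow> complex"
  assumes "prime p" and "odd p"
    and "c = 1 \<or> \<not> QuadRes (int p) c"
    and "is_xi p c \<xi>"
    and "is_gal_generator p \<gamma>"
  defines "r \<equiv> (p - 1) div 2" and "\<tau> \<equiv> \<gamma> \<circ> \<gamma>"
  shows "\<tau> ` (theta p c ` {0..r}) = theta p c ` {0..r} \<and> \<tau> (theta p c 0) = theta p c 0
    \<and> (\<exists>!P. perm_mat (r + 1) P \<and> map_mat \<tau> (Vmat p c) = P * Vmat p c)
    \<and> (\<forall>P Pinv. perm_mat (r + 1) P \<and> map_mat \<tau> (Vmat p c) = P * Vmat p c
          \<and> inverts_mat P Pinv \<and> inverts_mat Pinv P
          \<longrightarrow> (\<forall>g\<in>SL2 p. map_mat \<tau> (\<xi> g) = P * \<xi> g * Pinv))"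
proof -
  have gal: "\<gamma> \<in> gal p"
    using assms(5) unfolding is_gal_generator_def by blast
  have "\<not> int p dvd c"
    using not_dvd_if_one_or_nonresidue[OF assms(1,3)] .
  obtain a where a: "\<not> int p dvd int a" "\<gamma> (zeta p) = zeta p ^ a"
    using gal_aut.zeta_image[OF gal_aut.intro[OF gal] prime_gt_1_nat[OF assms(1)]] by blast
  interpret T: theta_galois p c \<gamma> a
    by (rule theta_galois.intro[OF assms(1,2) \<open>\<not> int p dvd c\<close> gal a])
  have eqs: "r = T.r" "\<tau> = T.\<tau>"
    unfolding r_def T.r_def \<tau>_def T.\<tau>_def by simp_all
  have range: "{0..T.r} = {..<T.r + 1}"
    by auto
  have conj: "map_mat T.\<tau> (\<xi> g) = P * \<xi> g * Pinv"
    if "perm_mat (T.r + 1) P" "map_mat T.\<tau> (Vmat p c) = P * Vmat p c"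
      "inverts_mat P Pinv" "inverts_mat Pinv P" "g \<in> SL2 p" for P Pinv g
  proof -
    have P: "P = perm_matrix (T.r + 1) T.\<pi>"
      using T.perm_matrix_unique[OF that(1,2)] .
    have "\<xi> g \<in> carrier_mat (T.r + 1) (T.r + 1)"
      using assms(4) that(5) unfolding is_xi_def Let_def T.r_def [symmetric] by blast
    then show ?thesis
      using T.map_mat_tau_intertwines[OF assms(4) that(5)] that(3,4) unfolding P
      by (intro eq_conj_if_intertwines[OF _ perm_matrix_carrier]) simp_all
  qed
  show ?thesis
    unfolding eqs range
  proof (intro conjI allI impI ballI)
    show "T.\<tau> (theta p c 0) = theta p c 0"
      using T.tau_theta[of 0] by simp
  qed (use T.tau_image_theta T.ex1_perm_mat_tau_Vmat conj in blast)+
qed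

end
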